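(* Let $M$, $\alpha,\beta,\gamma$ satisfy the standing assumptions described in the context, let $T>0$ and $b$ be as fixed in the context, and for $\xi\in\mathbb{R}^n$ let $W(t,\xi)\in\mathbb{C}^2$ be any solution on $[T,\infty)$ of $$\partial_t W=\begin{pmatrix}-2b(t)& i|\xi|\\ i|\xi|&0\end{pmatrix}W .$$ Then there exist positive constants $N$ and $K_1$ such that, for all $(t,\xi)\in Z_H$ with $\xi\neq0$: if $\alpha>0$, then $K_1^{-1}|W(t_\xi,\xi)|\le|W(t,\xi)|\le K_1|W(t_\xi,\xi)|$; if $\alpha\le0$, then $K_1^{-1}|W(T,\xi)|\le|W(t,\xi)|\le K_1|W(T,\xi)|$.
   Context: Standing assumptions: $M:[0,\infty)\to\mathbb{R}$ continuous; $\alpha\le1$, $\beta<1$, $\gamma>0$ with $\gamma\ge\beta\ge(\alpha+1)/2$ if $\alpha\ne0$ and $\gamma\ge\beta>1/2$ if $\alpha=0$; $M$ satisfies: (M1) if $\alpha\ge 0$, $\int_0^t\big|\int_s^\infty\int_\sigma^\infty M(\tau)\,d\tau\,d\sigma\big|\,ds\lesssim(1+t)^{\alpha}$; if $\alpha\le 0$, $\int_t^\infty\big|\int_s^\infty\int_\sigma^\infty M(\tau)\,d\tau\,d\sigma\big|\,ds\lesssim(1+t)^{\alpha}$ (both when $\alpha=0$); (M2) $|M(t)|\lesssim(1+t)^{-2\beta}$; (M3) $\big|\int_t^\infty M\big|\lesssim(1+t)^{-\gamma}$, $\int_t^\infty\big(\int_s^\infty M\big)^2ds\lesssim(1+t)^{-\gamma}$,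 $\int_0^\infty\int_t^\infty\big(\int_s^\infty M\big)^2\,ds\,dt<\infty$; here $f\lesssim g$ means $f\le Cg$ with $C$ independent of $t$, and the moreover the condition $\sup_{t\ge0}(1+t)^\alpha\int_t^\infty\int_s^\infty(\int_\sigma^\infty M)^2\,d\sigma\,ds<\infty$ holds. Definition of $b$ and $T$: $q_1:=M$, $Q_k(t):=-\int_t^\infty q_k$, $q_k:=\sum_{j=1}^{k-1}Q_jQ_{k-j}$ ($k\ge 2$), $\phi(t):=-\int_t^\infty Q_2$; $T>0$ is chosen so that $|\int_t^\infty Q_1(s)\,ds|\le1$ and $\phi(t)\le 6^{-4}$ for all $t\ge T$, and $b(t):=\sum_{k\ge1}Q_k(t)$ on $[T,\infty)$ (this series converges, $b$ solves $b'+b^2+M=0$, and $|b(t)|\lesssim(1+t)^{-\gamma}$, $|b'(t)|\lesssim(1+t)^{-2\beta}$, $|\int_t^\infty b|$ bounded for $t\ge T$). Zones: for $N>0$, $Z_H:=\{(t,\xi)\in[T,\infty)\times\mathbb{R}^n:(1+t)^\alpha|\xi|\ge N\}$, and for $\alpha\ne0$, $\xi\ne0$, $t_\xi:=\max\{T,(N|\xi|^{-1})^{1/\alpha}-1\}$. *)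

theory Defs
  imports "HOL-Analysis.Analysis"
begin

definition tail_int :: "(real \<Rightarrow> real) \<Rightarrow> real \<Rightarrow> real" where
  "tail_int f t = Lim at_top (\<lambda>R. integral {t..R} f)"

definition tail_conv :: "(real \<Rightarrow> real) \<Rightarrow> real \<Rightarrow> bool" where
  "tail_conv f t \<longleftrightarrow> (\<exists>L. ((\<lambda>R. integral {t..R} f) \<longlongrightarrow> L) at_top)"

text \<open>q_k from a table G of Q_j: q_1 = M, q_k = sum_{j=1}^{k-1} Q_j Q_{k-j}.\<close>
definition qof :: "(real \<Rightarrow> real) \<Rightarrow> (nat \<Rightarrow> real \<Rightarrow> real) \<Rightarrow> nat \<Rightarrow> real \<Rightarrow> real" where
  "qof M G k t = (if k = 1 then M t else (\<Sum>j=1..k-1. G j t * G (k-j) t))"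

text \<open>Qtab M n k = Q_k for 1 <= k <= n.\<close>
primrec Qtab :: "(real \<Rightarrow> real) \<Rightarrow> nat \<Rightarrow> nat \<Rightarrow> real \<Rightarrow> real" where
  "Qtab M 0 = (\<lambda>k t. 0)"
| "Qtab M (Suc n) = (\<lambda>k t. if k = Suc n then - tail_int (qof M (Qtab M n) (Suc n)) t
                           else Qtab M n k t)"

text \<open>Q_k(t) = - int_t^infty q_k (k >= 1).\<close>
definition QQ :: "(real \<Rightarrow> real) \<Rightarrow> nat \<Rightarrow> real \<Rightarrow> real" where
  "QQ M k = Qtab M k k"

definition qq :: "(real \<Rightarrow> real) \<Rightarrow> nat \<Rightarrow> real \<Rightarrow> real" where
  "qq M k = qof M (QQ M) k"

definition phi :: "(real \<Rightarrow> real) \<Rightarrow> real \<Rightarrow> real" where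
  "phi M t = - tail_int (QQ M 2) t"

definition bfun :: "(real \<Rightarrow> real) \<Rightarrow> real \<Rightarrow> real" where
  "bfun M t = (\<Sum>k. QQ M (Suc k) t)"

definition Amat :: "real \<Rightarrow> real \<Rightarrow> complex^2^2" where
  "Amat c r = (\<chi> i j. if i = 1 \<and> j = 1 then complex_of_real (-2 * c)
                 else if i = 1 \<and> j = 2 then \<i> * complex_of_real r
                 else if i = 2 \<and> j = 1 then \<i> * complex_of_real r
                 else 0)"

definition ZH :: "real \<Rightarrow> real \<Rightarrow> real \<Rightarrow> (real \<times> (real^'n)) set" where
  "ZH T \<alpha> N = {(t, \<xi>). t \<ge> T \<and> (1 + t) powr \<alpha> * norm \<xi> \<ge> N}"

definition t_xi :: "real \<Rightarrow> real \<Rightarrow> real \<Rightarrow> real^'n \<Rightarrow> real" where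
  "t_xi T \<alpha> N \<xi> = max T ((N / norm \<xi>) powr (1 / \<alpha>) - 1)"

end

theory Submission
  imports Defs
begin

text \<open>
  Write \<open>W = (w\<^sub>1, w\<^sub>2)\<close> and \<open>r = |\<xi>|\<close>. Along the system \<open>(|W|\<^sup>2)' = -4 b |w\<^sub>1|\<^sup>2\<close>,
  which need not be integrable. The correction \<open>F = |W|\<^sup>2 + 2 Q\<^sub>1 Im (conj w\<^sub>1 w\<^sub>2) / r\<close> and the
  integrating factor \<open>exp (-2 \<integral>\<^sub>t\<^sup>\<infinity> Q\<^sub>1)\<close> remove the leading term \<open>Q\<^sub>1\<close> of \<open>b\<close>: the resulting
  \<open>G\<close> satisfies \<open>|G'| \<le> 4/3 (5 |b - Q\<^sub>1| + |M| / r) G\<close>, and \<open>G\<close> is comparable to \<open>|W|\<^sup>2\<close>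
  as long as \<open>|Q\<^sub>1| \<le> r/4\<close>, which is what the zone \<open>Z\<^sub>H\<close> guarantees for large \<open>N\<close>.
  The series defining \<open>b\<close> satisfies \<open>|b - Q\<^sub>1| \<le> 2 u\<close> with \<open>u = -Q\<^sub>2\<close>, whose integral
  \<open>\<phi>(t)\<close> is at most \<open>6\<^sup>-\<^sup>4\<close>, while (M2) bounds \<open>\<integral> |M| / r\<close> over the part of the zone above
  \<open>t\<^sub>\<xi>\<close> (resp. \<open>T\<close>). Gronwall's inequality in both directions then gives the estimate.
\<close>

section \<open>Improper integrals over \<open>[a, \<infinity>)\<close>\<close>

lemma tail_intI:
  assumes "((\<lambda>R. integral {a..R} f) \<longlongrightarrow> L) at_top"
  shows "tail_conv f a" "tail_int f a = L"
  using assms unfolding tail_int_def tail_conv_def by (auto intro: tendsto_Lim)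

lemma tail_int_split:
  fixes f :: "real \<Rightarrow> real"
  assumes cont: "continuous_on {a..} f" and conv: "tail_conv f a" and "a \<le> t"
  shows "tail_conv f t" "tail_int f t = tail_int f a - integral {a..t} f"
proof -
  obtain L where L: "((\<lambda>R. integral {a..R} f) \<longlongrightarrow> L) at_top"
    using conv unfolding tail_conv_def by blast
  have eq: "eventually (\<lambda>R. integral {a..R} f - integral {a..t} f = integral {t..R} f) at_top"
  proof (rule eventually_at_top_linorderI)
    fix R assume "t \<le> R"
    have "f integrable_on {a..R}"
      by (intro integrable_continuous_real continuous_on_subset[OF cont]) auto
    from Henstock_Kurzweil_Integration.integral_combine[OF \<open>a \<le> t\<close> \<open>t \<le> R\<close> this]
    show "integral {a..R} f - integral {a..t} f = integral {t..R} f" by linarith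
  qed
  have "((\<lambda>R. integral {t..R} f) \<longlongrightarrow> L - integral {a..t} f) at_top"
    by (rule Lim_transform_eventually[OF tendsto_diff[OF L tendsto_const] eq])
  from tail_intI[OF this] tail_intI(2)[OF L]
  show "tail_conv f t" "tail_int f t = tail_int f a - integral {a..t} f" by auto
qed

lemma tail_conv_minus: "tail_conv g t \<Longrightarrow> tail_conv (\<lambda>s. - g s) t"
  unfolding tail_conv_def using tendsto_minus by fastforce

lemma tail_int_minus:
  assumes "tail_conv g t"
  shows "tail_int (\<lambda>s. - g s) t = - tail_int g t"
proof -
  obtain L where L: "((\<lambda>R. integral {t..R} g) \<longlongrightarrow> L) at_top"
    using assms unfolding tail_conv_def by blast
  then have "((\<lambda>R. integral {t..R} (\<lambda>s. - g s)) \<longlongrightarrow> - L) at_top"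
    using tendsto_minus[OF L] by simp
  from tail_intI(2)[OF this] tail_intI(2)[OF L] show ?thesis by simp
qed

lemma has_real_derivative_integral_upper:
  fixes f :: "real \<Rightarrow> real"
  assumes cont: "continuous_on {a..} f" and "a < t"
  shows "((\<lambda>s. integral {a..s} f) has_real_derivative f t) (at t)"
proof -
  have "((\<lambda>s. integral {a..s} f) has_real_derivative f t) (at t within {a..t+1})"
    by (rule integral_has_real_derivative, rule continuous_on_subset[OF cont]) (use \<open>a < t\<close> in auto)
  moreover have "at t within {a..t+1} = at t"
    by (rule at_within_interior) (use \<open>a < t\<close> in auto)
  ultimately show ?thesis by simp
qed

lemma has_real_derivative_tail_int:
  fixes f :: "real \<Rightarrow> real"
  assumes cont: "continuous_on {a..} f" and conv: "tail_conv f a" and "a < t"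
  shows "(tail_int f has_real_derivative - f t) (at t)"
proof -
  have "((\<lambda>s. tail_int f a - integral {a..s} f) has_real_derivative - f t) (at t)"
    using DERIV_diff[OF DERIV_const has_real_derivative_integral_upper[OF cont \<open>a < t\<close>]] by simp
  then show ?thesis
    by (rule has_field_derivative_transform_within_open[of _ _ _ "{a<..}"])
       (use \<open>a < t\<close> tail_int_split(2)[OF cont conv, symmetric] in simp_all)
qed

lemma continuous_on_integral_upper:
  fixes f :: "real \<Rightarrow> real"
  assumes cont: "continuous_on {a..} f"
  shows "continuous_on {a..} (\<lambda>s. integral {a..s} f)"
proof -
  have "continuous_on {a..a+1} (\<lambda>s. integral {a..s} f)"
    by (intro indefinite_integral_continuous_1 integrable_continuous_real
        continuous_on_subset[OF cont]) auto
  moreover have "continuous_on {a+1..} (\<lambda>s. integral {a..s} f)"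
    using DERIV_isCont[OF has_real_derivative_integral_upper[OF cont]]
    by (intro continuous_at_imp_continuous_on) simp
  ultimately have "continuous_on ({a..a+1} \<union> {a+1..}) (\<lambda>s. integral {a..s} f)"
    by (intro continuous_on_closed_Un) auto
  moreover have "{a..a+1} \<union> {a+1..} = {a..}" by auto
  ultimately show ?thesis by metis
qed

lemma continuous_on_tail_int:
  fixes f :: "real \<Rightarrow> real"
  assumes cont: "continuous_on {a..} f" and conv: "tail_conv f a"
  shows "continuous_on {a..} (tail_int f)"
proof -
  have "continuous_on {a..} (\<lambda>s. tail_int f a - integral {a..s} f)"
    by (intro continuous_intros continuous_on_integral_upper cont)
  then show ?thesis
    by (rule continuous_on_eq) (use tail_int_split(2)[OF cont conv, symmetric] in simp)
qed

lemma tail_int_eq_integral: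
  fixes f :: "real \<Rightarrow> real"
  assumes "f absolutely_integrable_on {a..}"
  shows "tail_conv f a" "tail_int f a = integral {a..} f"
proof -
  have "((\<lambda>b. set_lebesgue_integral lebesgue {a..b} f)
          \<longlongrightarrow> set_lebesgue_integral lebesgue {a..} f) at_top"
    by (rule tendsto_set_lebesgue_integral_at_top) (use assms in auto)
  moreover have "set_lebesgue_integral lebesgue {a..b} f = integral {a..b} f" for b
    by (rule set_lebesgue_integral_eq_integral(2), rule set_integrable_subset[OF assms]) auto
  ultimately have "((\<lambda>R. integral {a..R} f) \<longlongrightarrow> integral {a..} f) at_top"
    using set_lebesgue_integral_eq_integral(2)[OF assms] by simp
  then show "tail_conv f a" "tail_int f a = integral {a..} f"
    by (rule tail_intI)+
qed

lemma nonneg_tail_int_eq_integral: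
  fixes f :: "real \<Rightarrow> real"
  assumes cont: "continuous_on {a..} f" and conv: "tail_conv f a"
    and nonneg: "\<And>x. x \<ge> a \<Longrightarrow> f x \<ge> 0"
  shows "f absolutely_integrable_on {a..}" "integral {a..} f = tail_int f a"
proof -
  obtain L where L: "((\<lambda>R. integral {a..R} f) \<longlongrightarrow> L) at_top"
    using conv unfolding tail_conv_def by blast
  have "(f has_integral L) {a..}"
    by (rule has_integral_to_inf[OF _ L nonneg], rule integrable_continuous_real,
        rule continuous_on_subset[OF cont]) auto
  then show "f absolutely_integrable_on {a..}" "integral {a..} f = tail_int f a"
    using nonnegative_absolutely_integrable_1[of f "{a..}"] nonneg tail_intI(2)[OF L]
    by (auto simp: integral_unique has_integral_integrable)
qed

lemma continuous_dominated_absolutely_integrable: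
  fixes f g :: "real \<Rightarrow> real"
  assumes "continuous_on {a..} f" and "g integrable_on {a..}"
    and "\<And>x. x \<ge> a \<Longrightarrow> \<bar>f x\<bar> \<le> g x"
  shows "f absolutely_integrable_on {a..}"
  by (rule measurable_bounded_by_integrable_imp_absolutely_integrable[OF
      continuous_imp_measurable_on_sets_lebesgue[OF assms(1)] _ assms(2)]) (use assms(3) in auto)

section \<open>The Riccati series for \<open>b\<close>\<close>

lemma Qtab_eq_QQ: "k \<le> n \<Longrightarrow> Qtab M n k = QQ M k"
proof (induction n arbitrary: k)
  case 0
  then show ?case by (simp add: QQ_def)
next
  case (Suc n)
  then show ?case
  proof (cases "k = Suc n")
    case True
    then show ?thesis by (simp add: QQ_def)
  next
    case False
    then show ?thesis using Suc by (simp del: Qtab.simps(2) add: Qtab.simps(2)[of M n])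
  qed
qed

lemma QQ_Suc: "QQ M (Suc n) = (\<lambda>t. - tail_int (qq M (Suc n)) t)"
proof -
  have "qof M (Qtab M n) (Suc n) = qq M (Suc n)"
    unfolding qq_def qof_def by (intro ext) (auto intro!: sum.cong simp: Qtab_eq_QQ)
  then show ?thesis by (simp add: QQ_def)
qed

lemma qq_eq_sum: "k \<ge> 2 \<Longrightarrow> qq M k t = (\<Sum>j=1..k-1. QQ M j t * QQ M (k-j) t)"
  by (simp add: qq_def qof_def)

lemma QQ_1: "QQ M 1 = (\<lambda>t. - tail_int M t)"
proof -
  have "qq M (Suc 0) = M" by (simp add: qq_def qof_def fun_eq_iff)
  then show ?thesis using QQ_Suc[of M 0] by simp
qed

lemma QQ_2: "QQ M 2 = (\<lambda>t. - tail_int (\<lambda>s. (tail_int M s)^2) t)"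
proof -
  have "qq M 2 = (\<lambda>s. (tail_int M s)^2)"
    by (rule ext, subst qq_eq_sum) (auto simp: QQ_1[unfolded One_nat_def] power2_eq_square)
  then show ?thesis using QQ_Suc[of M 1] by (simp add: numeral_2_eq_2)
qed

lemma sum_convolution_le_square:
  fixes a :: "nat \<Rightarrow> real"
  assumes nonneg: "\<And>j. a j \<ge> 0"
  shows "(\<Sum>k=2..n+1. \<Sum>j=1..k-1. a j * a (k-j)) \<le> (\<Sum>j=1..n. a j)^2"
proof -
  define P where "P = {(i,j). 1 \<le> i \<and> 1 \<le> j \<and> i + j \<le> n+1}"
  have "(\<Sum>k=2..n+1. \<Sum>j=1..k-1. a j * a (k-j))
      = (\<Sum>(k,j)\<in>Sigma {2..n+1} (\<lambda>k. {1..k-1}). a j * a (k-j))"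
    by (rule sum.Sigma) auto
  also have "\<dots> = (\<Sum>(i,j)\<in>P. a i * a j)"
    by (rule sum.reindex_bij_witness[where i="\<lambda>(i,j). (i+j, i)" and j="\<lambda>(k,j). (j, k-j)"])
       (auto simp: P_def)
  also have "\<dots> \<le> (\<Sum>(i,j)\<in>{1..n}\<times>{1..n}. a i * a j)"
    by (rule sum_mono2) (auto simp: P_def nonneg)
  also have "\<dots> = (\<Sum>j=1..n. a j)^2"
    by (simp add: power2_eq_square sum_product sum.cartesian_product)
  finally show ?thesis .
qed

locale riccati_setting =
  fixes M :: "real \<Rightarrow> real" and T :: real
  assumes continuous_M: "continuous_on {0..} M"
    and conv_M: "tail_conv M 0"
    and conv_tail_M: "tail_conv (tail_int M) 0"
    and conv_tail_M_sq: "tail_conv (\<lambda>s. (tail_int M s)^2) 0"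
    and conv_u: "tail_conv (\<lambda>s. tail_int (\<lambda>\<sigma>. (tail_int M \<sigma>)^2) s) 0"
    and T_pos: "T > 0"
    and tail_QQ_1_le: "\<And>t. t \<ge> T \<Longrightarrow> \<bar>tail_int (QQ M 1) t\<bar> \<le> 1"
    and phi_le: "\<And>t. t \<ge> T \<Longrightarrow> phi M t \<le> 6 powr (-4)"
begin

definition u :: "real \<Rightarrow> real" where "u = tail_int (\<lambda>s. (tail_int M s)^2)"

lemma QQ_2_eq_u: "QQ M 2 = (\<lambda>t. - u t)"
  by (simp add: QQ_2 u_def)

lemma continuous_on_tail_M: "continuous_on {0..} (tail_int M)"
  by (rule continuous_on_tail_int[OF continuous_M conv_M])

lemma continuous_on_QQ_1: "continuous_on {0..} (QQ M 1)"
  unfolding QQ_1 by (intro continuous_intros continuous_on_tail_M)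

lemma has_real_derivative_QQ_1: "t > 0 \<Longrightarrow> (QQ M 1 has_real_derivative M t) (at t)"
  unfolding QQ_1 using DERIV_minus[OF has_real_derivative_tail_int[OF continuous_M conv_M]] by simp

lemma tail_conv_QQ_1: "tail_conv (QQ M 1) 0"
  unfolding QQ_1 by (rule tail_conv_minus[OF conv_tail_M])

lemma continuous_on_tail_M_sq: "continuous_on {0..} (\<lambda>s. (tail_int M s)^2)"
  by (intro continuous_intros continuous_on_tail_M)

lemma continuous_on_u: "continuous_on {0..} u"
  unfolding u_def by (rule continuous_on_tail_int[OF continuous_on_tail_M_sq conv_tail_M_sq])

lemma tail_M_sq_integral:
  assumes "t \<ge> 0"
  shows "(\<lambda>s. (tail_int M s)^2) absolutely_integrable_on {t..}"
    "integral {t..} (\<lambda>s. (tail_int M s)^2) = u t"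
proof -
  have "continuous_on {t..} (\<lambda>s. (tail_int M s)^2)"
    by (rule continuous_on_subset[OF continuous_on_tail_M_sq]) (use assms in auto)
  from nonneg_tail_int_eq_integral[OF this tail_int_split(1)[OF continuous_on_tail_M_sq conv_tail_M_sq assms]]
  show "(\<lambda>s. (tail_int M s)^2) absolutely_integrable_on {t..}"
    "integral {t..} (\<lambda>s. (tail_int M s)^2) = u t"
    unfolding u_def by auto
qed

lemma u_nonneg: "t \<ge> 0 \<Longrightarrow> u t \<ge> 0"
  using tail_M_sq_integral[of t] integral_nonneg[of "\<lambda>s. (tail_int M s)^2" "{t..}"]
  by (auto dest: set_lebesgue_integral_eq_integral(1))

lemma u_antimono:
  assumes "0 \<le> t" "t \<le> s"
  shows "u s \<le> u t"
proof -
  have "u s = u t - integral {t..s} (\<lambda>s. (tail_int M s)^2)"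
    unfolding u_def
    by (rule tail_int_split(2)[OF continuous_on_subset[OF continuous_on_tail_M_sq]
          tail_int_split(1)[OF continuous_on_tail_M_sq conv_tail_M_sq]]) (use assms in auto)
  moreover have "integral {t..s} (\<lambda>s. (tail_int M s)^2) \<ge> 0"
    by (rule integral_nonneg)
       (use assms in \<open>auto intro!: integrable_continuous_real continuous_on_subset[OF continuous_on_tail_M_sq]\<close>)
  ultimately show ?thesis by linarith
qed

lemma tail_conv_u: "t \<ge> 0 \<Longrightarrow> tail_conv u t"
  using tail_int_split(1)[OF continuous_on_u conv_u[folded u_def]] .

lemma phi_eq_tail_int_u: "t \<ge> 0 \<Longrightarrow> phi M t = tail_int u t"
  unfolding phi_def QQ_2_eq_u by (simp add: tail_int_minus tail_conv_u)

lemma u_integral: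
  assumes "t \<ge> 0"
  shows "u absolutely_integrable_on {t..}" "integral {t..} u = phi M t"
proof -
  have "continuous_on {t..} u"
    by (rule continuous_on_subset[OF continuous_on_u]) (use assms in auto)
  from nonneg_tail_int_eq_integral[OF this tail_conv_u[OF assms]] u_nonneg assms
  show "u absolutely_integrable_on {t..}" "integral {t..} u = phi M t"
    by (auto simp: phi_eq_tail_int_u[OF assms])
qed

lemma has_real_derivative_phi: "t > 0 \<Longrightarrow> (phi M has_real_derivative - u t) (at t)"
  by (rule has_field_derivative_transform_within_open[of _ _ _ "{0<..}",
        OF has_real_derivative_tail_int[OF continuous_on_u conv_u[folded u_def]]])
     (auto simp: phi_eq_tail_int_u)

lemma phi_nonneg: "t \<ge> 0 \<Longrightarrow> phi M t \<ge> 0"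
  using u_integral[of t] integral_nonneg[of u "{t..}"] u_nonneg
  by (auto dest: set_lebesgue_integral_eq_integral(1))

lemma phi_le_1296: "t \<ge> T \<Longrightarrow> phi M t \<le> 1/1296"
  using phi_le by (simp add: powr_minus powr_numeral)

lemma integral_u_sq_le:
  assumes "t \<ge> T"
  shows "(\<lambda>s. (u s)^2) absolutely_integrable_on {t..}"
    "integral {t..} (\<lambda>s. (u s)^2) \<le> u t * phi M t"
proof -
  have t: "t \<ge> 0" using assms T_pos by simp
  have "(\<lambda>s. u t * u s) integrable_on {t..}"
    using integrable_cmul[OF set_lebesgue_integral_eq_integral(1)[OF u_integral(1)[OF t]], of "u t"]
    by simp
  moreover have bound: "\<bar>(u s)^2\<bar> \<le> u t * u s" if "s \<ge> t" for s
    using that t u_nonneg[of s] u_antimono[of t s] by (simp add: power2_eq_square mult_right_mono)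
  moreover have "continuous_on {t..} (\<lambda>s. (u s)^2)"
    by (intro continuous_intros continuous_on_subset[OF continuous_on_u]) (use t in auto)
  ultimately show integrable: "(\<lambda>s. (u s)^2) absolutely_integrable_on {t..}"
    by (intro continuous_dominated_absolutely_integrable)
  have "integral {t..} (\<lambda>s. (u s)^2) \<le> integral {t..} (\<lambda>s. u t * u s)"
    by (rule integral_le) (use integrable \<open>(\<lambda>s. u t * u s) integrable_on {t..}\<close> bound in
      \<open>auto simp: absolutely_integrable_on_def\<close>)
  also have "\<dots> = u t * phi M t" using u_integral(2)[OF t] by simp
  finally show "integral {t..} (\<lambda>s. (u s)^2) \<le> u t * phi M t" .
qed

text \<open>The weights come from \<open>4 a v \<le> a\<^sup>2/18 + 72 v\<^sup>2\<close>; they are chosen so that,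
  with \<open>\<phi> \<le> 6\<^sup>-\<^sup>4\<close>, the integral of the majorant over \<open>[t,\<infinity>)\<close> is at most \<open>u t\<close>.\<close>
definition q_majorant :: "real \<Rightarrow> real" where
  "q_majorant s = (1/18) * (tail_int M s)^2 + 76 * (u s)^2"

lemma q_majorant_integral:
  assumes "t \<ge> T"
  shows "q_majorant absolutely_integrable_on {t..}" "integral {t..} q_majorant \<le> u t"
proof -
  have t: "t \<ge> 0" using assms T_pos by simp
  have int1: "(\<lambda>s. (1/18) * (tail_int M s)^2) integrable_on {t..}"
    using set_lebesgue_integral_eq_integral(1)[OF tail_M_sq_integral(1)[OF t]] by simp
  have int2: "(\<lambda>s. 76 * (u s)^2) integrable_on {t..}"
    using set_lebesgue_integral_eq_integral(1)[OF integral_u_sq_le(1)[OF assms]] by simp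
  have "q_majorant integrable_on {t..}"
    unfolding q_majorant_def by (rule integrable_add[OF int1 int2])
  then show "q_majorant absolutely_integrable_on {t..}"
    by (rule nonnegative_absolutely_integrable_1) (simp add: q_majorant_def)
  have "integral {t..} q_majorant = (1/18) * u t + 76 * integral {t..} (\<lambda>s. (u s)^2)"
    unfolding q_majorant_def using integral_add[OF int1 int2] tail_M_sq_integral(2)[OF t] by simp
  also have "\<dots> \<le> (1/18) * u t + 76 * (u t * (1/1296))"
    using integral_u_sq_le(2)[OF assms] mult_left_mono[OF phi_le_1296[OF assms] u_nonneg[OF t]]
    by linarith
  also have "\<dots> \<le> u t" using u_nonneg[OF t] by simp
  finally show "integral {t..} q_majorant \<le> u t" .
qed

definition partial_tails_bounded :: "nat \<Rightarrow> bool" where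
  "partial_tails_bounded n \<longleftrightarrow> (\<forall>k\<in>{2..n}. continuous_on {T..} (QQ M k)) \<and>
     (\<forall>s\<ge>T. (\<Sum>k=2..n. \<bar>QQ M k s\<bar>) \<le> 2 * u s)"

lemma partial_tails_bounded_2: "partial_tails_bounded 2"
proof -
  have "continuous_on {T..} (\<lambda>t. - u t)"
    using continuous_on_subset[OF continuous_on_u, of "{T..}"] T_pos by (auto intro: continuous_intros)
  then show ?thesis
    using T_pos u_nonneg by (simp add: partial_tails_bounded_def QQ_2_eq_u)
qed

lemma sum_abs_qq_le_q_majorant:
  assumes n: "n \<ge> 2" and bounded: "partial_tails_bounded n" and s: "s \<ge> T"
  shows "(\<Sum>k=3..Suc n. \<bar>qq M k s\<bar>) \<le> q_majorant s"
proof -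
  define a where "a j = \<bar>QQ M j s\<bar>" for j
  define A where "A = (\<Sum>j=2..n. a j)"
  have a_nonneg: "a j \<ge> 0" for j unfolding a_def by simp
  have A: "0 \<le> A" "A \<le> 2 * u s"
    using bounded s a_nonneg unfolding A_def a_def partial_tails_bounded_def by (auto intro: sum_nonneg)
  have "(\<Sum>k=3..Suc n. \<bar>qq M k s\<bar>) \<le> (\<Sum>k=3..Suc n. \<Sum>j=1..k-1. a j * a (k-j))"
  proof (rule sum_mono)
    fix k assume "k \<in> {3..Suc n}"
    then have "qq M k s = (\<Sum>j=1..k-1. QQ M j s * QQ M (k-j) s)"
      by (intro qq_eq_sum) simp
    then show "\<bar>qq M k s\<bar> \<le> (\<Sum>j=1..k-1. a j * a (k-j))"
      unfolding a_def using sum_abs[of "\<lambda>j. QQ M j s * QQ M (k-j) s" "{1..k-1}"]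
      by (simp add: abs_mult)
  qed
  also have "\<dots> = (\<Sum>k=2..n+1. \<Sum>j=1..k-1. a j * a (k-j)) - a 1 * a 1"
    using sum.atLeast_Suc_atMost[of 2 "n+1" "\<lambda>k. \<Sum>j=1..k-1. a j * a (k-j)"] n
    by (simp add: numeral_3_eq_3)
  also have "\<dots> \<le> (\<Sum>j=1..n. a j)^2 - a 1 * a 1"
    using sum_convolution_le_square[of a n, OF a_nonneg] by simp
  also have "(\<Sum>j=1..n. a j) = a 1 + A"
    unfolding A_def using n by (subst sum.atLeast_Suc_atMost) (simp_all add: numeral_2_eq_2)
  also have "(a 1 + A)^2 - a 1 * a 1 = 2 * a 1 * A + A^2"
    by (simp add: power2_eq_square algebra_simps)
  also have "\<dots> \<le> 4 * a 1 * u s + 4 * (u s)^2"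
    using mult_left_mono[OF A(2), of "2 * a 1"] power_mono[OF A(2) A(1), of 2] a_nonneg[of 1]
    by (simp add: power2_eq_square algebra_simps)
  also have "\<dots> \<le> (1/18) * (a 1)^2 + 76 * (u s)^2"
    using zero_le_power2[of "a 1 - 36 * u s"] by (simp add: power2_eq_square algebra_simps)
  also have "(a 1)^2 = (tail_int M s)^2"
    unfolding a_def by (simp add: QQ_1[unfolded One_nat_def])
  finally show ?thesis unfolding q_majorant_def .
qed

lemma continuous_on_qq:
  assumes bounded: "partial_tails_bounded n" and k: "k \<in> {2..Suc n}"
  shows "continuous_on {T..} (qq M k)"
proof -
  have QQ: "continuous_on {T..} (QQ M j)" if "1 \<le> j" "j \<le> n" for j
    using that bounded continuous_on_subset[OF continuous_on_QQ_1, of "{T..}"] T_pos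
    unfolding partial_tails_bounded_def by (cases "j = 1") auto
  have "continuous_on {T..} (\<lambda>s. \<Sum>j=1..k-1. QQ M j s * QQ M (k-j) s)"
    using k by (intro continuous_on_sum continuous_on_mult QQ) auto
  then show ?thesis
    using k by (simp add: qq_eq_sum)
qed

lemma absolutely_integrable_qq:
  assumes n: "n \<ge> 2" and bounded: "partial_tails_bounded n"
    and t: "t \<ge> T" and k: "k \<in> {3..Suc n}"
  shows "qq M k absolutely_integrable_on {t..}"
proof (rule continuous_dominated_absolutely_integrable)
  show "continuous_on {t..} (qq M k)"
    using continuous_on_qq[OF bounded, of k] k t by (auto intro: continuous_on_subset)
  show "q_majorant integrable_on {t..}"
    using q_majorant_integral(1)[OF t] by (rule set_lebesgue_integral_eq_integral(1))
  show "\<bar>qq M k s\<bar> \<le> q_majorant s" if "t \<le> s" for s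
    using member_le_sum[of k "{3..Suc n}" "\<lambda>k. \<bar>qq M k s\<bar>"] k
      sum_abs_qq_le_q_majorant[OF n bounded, of s] that t by simp
qed

lemma partial_tails_bounded_Suc:
  assumes n: "n \<ge> 2" and bounded: "partial_tails_bounded n"
  shows "partial_tails_bounded (Suc n)"
proof -
  note integrable = absolutely_integrable_qq[OF n bounded]
  have abs_QQ_le: "\<bar>QQ M k t\<bar> \<le> integral {t..} (\<lambda>s. \<bar>qq M k s\<bar>)"
    if "t \<ge> T" "k \<in> {3..Suc n}" for t k
  proof -
    have "QQ M k t = - integral {t..} (qq M k)"
      using QQ_Suc[of M "k - 1"] tail_int_eq_integral(2)[OF integrable[OF that]] that by simp
    moreover have "norm (integral {t..} (qq M k)) \<le> integral {t..} (\<lambda>s. \<bar>qq M k s\<bar>)"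
      using integrable[OF that] unfolding absolutely_integrable_on_def
      by (intro integral_norm_bound_integral) auto
    ultimately show ?thesis by simp
  qed
  have "(\<Sum>k=2..Suc n. \<bar>QQ M k t\<bar>) \<le> 2 * u t" if t: "t \<ge> T" for t
  proof -
    have t0: "t \<ge> 0" using t T_pos by simp
    have "(\<Sum>k=3..Suc n. \<bar>QQ M k t\<bar>) \<le> (\<Sum>k=3..Suc n. integral {t..} (\<lambda>s. \<bar>qq M k s\<bar>))"
      using abs_QQ_le[OF t] by (intro sum_mono) auto
    also have "\<dots> = integral {t..} (\<lambda>s. \<Sum>k=3..Suc n. \<bar>qq M k s\<bar>)"
      using integrable[OF t] by (intro integral_sum[symmetric]) (auto simp: absolutely_integrable_on_def)
    also have "\<dots> \<le> integral {t..} q_majorant"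
      using integrable[OF t] q_majorant_integral(1)[OF t] sum_abs_qq_le_q_majorant[OF n bounded] t
      by (intro integral_le integrable_sum) (auto simp: absolutely_integrable_on_def)
    also have "\<dots> \<le> u t" by (rule q_majorant_integral(2)[OF t])
    finally have "(\<Sum>k=3..Suc n. \<bar>QQ M k t\<bar>) \<le> u t" .
    moreover have "(\<Sum>k=2..Suc n. \<bar>QQ M k t\<bar>) = \<bar>QQ M 2 t\<bar> + (\<Sum>k=3..Suc n. \<bar>QQ M k t\<bar>)"
      using n by (subst sum.atLeast_Suc_atMost) (simp_all add: numeral_3_eq_3)
    ultimately show ?thesis using u_nonneg[OF t0] by (simp add: QQ_2_eq_u)
  qed
  moreover have "continuous_on {T..} (QQ M (Suc n))"
  proof -
    have "tail_conv (qq M (Suc n)) T"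
      by (rule tail_int_eq_integral(1), rule integrable) (use n in auto)
    with continuous_on_qq[OF bounded, of "Suc n"] n show ?thesis
      unfolding QQ_Suc by (intro continuous_intros continuous_on_tail_int) auto
  qed
  ultimately show ?thesis
    using bounded unfolding partial_tails_bounded_def by (auto simp: le_Suc_eq)
qed

lemma partial_tails_bounded: "n \<ge> 2 \<Longrightarrow> partial_tails_bounded n"
proof (induction n rule: nat_induct_at_least)
  case base
  then show ?case by (rule partial_tails_bounded_2)
next
  case (Suc n)
  then show ?case by (rule partial_tails_bounded_Suc)
qed

lemma abs_bfun_minus_QQ_1_le:
  assumes t: "t \<ge> T"
  shows "\<bar>bfun M t - QQ M 1 t\<bar> \<le> 2 * u t"
proof -
  define f where "f k = QQ M (k + 2) t" for k
  have partial_sums: "(\<Sum>k<n. \<bar>f k\<bar>) \<le> 2 * u t" for n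
  proof (cases n)
    case 0
    then show ?thesis using u_nonneg t T_pos by simp
  next
    case (Suc m)
    have "(\<Sum>k<n. \<bar>f k\<bar>) = (\<Sum>k=2..m+2. \<bar>QQ M k t\<bar>)"
      unfolding f_def Suc lessThan_Suc_atMost
      using sum.shift_bounds_cl_nat_ivl[of "\<lambda>k. \<bar>QQ M k t\<bar>" 0 2 m]
      by (simp only: atMost_atLeast0 add_0_left)
    also have "\<dots> \<le> 2 * u t"
      using partial_tails_bounded[of "m+2"] t unfolding partial_tails_bounded_def by simp
    finally show ?thesis .
  qed
  have summable: "summable (\<lambda>k. \<bar>f k\<bar>)"
    by (rule bounded_imp_summable[of _ "2 * u t"])
       (use partial_sums[of "Suc _"] in \<open>simp_all add: lessThan_Suc_atMost\<close>)
  have "summable (\<lambda>k. QQ M (Suc k) t)"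
    using summable_Suc_iff[of "\<lambda>k. QQ M (Suc k) t"] summable_rabs_cancel[OF summable]
    by (simp add: f_def)
  from suminf_split_head[OF this] have "bfun M t = QQ M 1 t + (\<Sum>k. f k)"
    unfolding bfun_def f_def by simp
  moreover have "\<bar>\<Sum>k. f k\<bar> \<le> 2 * u t"
    using summable_rabs[OF summable] suminf_le_const[OF summable partial_sums] by linarith
  ultimately show ?thesis by simp
qed

end

section \<open>The corrected energy\<close>

lemma two_sided_gronwall:
  fixes G H h :: "real \<Rightarrow> real"
  assumes "a \<le> b" and cont: "continuous_on {a..b} G" "continuous_on {a..b} H"
    and H: "\<And>x. a < x \<Longrightarrow> x < b \<Longrightarrow> (H has_real_derivative h x) (at x)"
    and G: "\<And>x. a < x \<Longrightarrow> x < b \<Longrightarrow> \<exists>D. (G has_real_derivative D) (at x) \<and> \<bar>D\<bar> \<le> h x * G x"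
  shows "G b \<le> exp (H b - H a) * G a" "G a \<le> exp (H b - H a) * G b"
proof -
  have "G b * exp (- H b) \<le> G a * exp (- H a)"
  proof (rule DERIV_nonpos_imp_decreasing_open[OF \<open>a \<le> b\<close>])
    fix x assume x: "a < x" "x < b"
    then obtain D where D: "(G has_real_derivative D) (at x)" "\<bar>D\<bar> \<le> h x * G x" using G by blast
    have "((\<lambda>s. G s * exp (- H s)) has_real_derivative exp (- H x) * (D - h x * G x)) (at x)"
      by (auto intro!: derivative_eq_intros D(1) H[OF x] simp: algebra_simps)
    moreover have "exp (- H x) * (D - h x * G x) \<le> 0"
      using D(2) by (intro mult_nonneg_nonpos) auto
    ultimately show "\<exists>y. ((\<lambda>s. G s * exp (- H s)) has_real_derivative y) (at x) \<and> y \<le> 0" by blast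
  qed (intro continuous_intros cont)
  then show "G b \<le> exp (H b - H a) * G a"
    by (simp add: exp_diff exp_minus field_simps)
  have "G a * exp (H a) \<le> G b * exp (H b)"
  proof (rule DERIV_nonneg_imp_increasing_open[OF \<open>a \<le> b\<close>])
    fix x assume x: "a < x" "x < b"
    then obtain D where D: "(G has_real_derivative D) (at x)" "\<bar>D\<bar> \<le> h x * G x" using G by blast
    have "((\<lambda>s. G s * exp (H s)) has_real_derivative exp (H x) * (D + h x * G x)) (at x)"
      by (auto intro!: derivative_eq_intros D(1) H[OF x] simp: algebra_simps)
    moreover have "exp (H x) * (D + h x * G x) \<ge> 0"
      using D(2) by (intro mult_nonneg_nonneg) auto
    ultimately show "\<exists>y. ((\<lambda>s. G s * exp (H s)) has_real_derivative y) (at x) \<and> y \<ge> 0" by blast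
  qed (intro continuous_intros cont)
  then show "G a \<le> exp (H b - H a) * G b"
    by (simp add: exp_diff field_simps)
qed

lemma has_real_derivative_Re_Im_vec_nth:
  fixes w :: "real \<Rightarrow> complex^'n"
  assumes "(w has_vector_derivative w') (at x)"
  shows "((\<lambda>s. Re (w s $ i)) has_real_derivative Re (w' $ i)) (at x)"
    "((\<lambda>s. Im (w s $ i)) has_real_derivative Im (w' $ i)) (at x)"
proof -
  have "bounded_linear (\<lambda>v::complex^'n. Re (v $ i))" "bounded_linear (\<lambda>v::complex^'n. Im (v $ i))"
    by (intro bounded_linear_compose[OF bounded_linear_Re] bounded_linear_compose[OF bounded_linear_Im]
        bounded_linear_vec_nth)+
  from this[THEN bounded_linear.has_vector_derivative]
  show "((\<lambda>s. Re (w s $ i)) has_real_derivative Re (w' $ i)) (at x)"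
    "((\<lambda>s. Im (w s $ i)) has_real_derivative Im (w' $ i)) (at x)"
    using assms by (simp_all add: has_real_derivative_iff_has_vector_derivative)
qed

lemma Amat_mult_vec_nth:
  "(Amat c r *v w) $ 1 = complex_of_real (-2 * c) * w $ 1 + \<i> * complex_of_real r * w $ 2"
  "(Amat c r *v w) $ 2 = \<i> * complex_of_real r * w $ 1"
  by (simp_all add: Amat_def matrix_vector_mult_def sum_2)

lemma corrected_energy_comparable_components:
  fixes xa ya xb yb q r :: real
  assumes r: "r > 0" and q: "\<bar>q\<bar> \<le> r/4"
  defines "E \<equiv> xa^2 + ya^2 + xb^2 + yb^2" and "J \<equiv> xa * yb - ya * xb"
  shows "2 * \<bar>J\<bar> \<le> E" "3/4 * E \<le> E + 2 * q * J / r" "E + 2 * q * J / r \<le> 5/4 * E"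
proof -
  have "(xa - yb)^2 + (ya + xb)^2 = E - 2 * J" "(xa + yb)^2 + (ya - xb)^2 = E + 2 * J"
    unfolding E_def J_def by (simp_all add: power2_eq_square algebra_simps)
  moreover have "0 \<le> (xa - yb)^2 + (ya + xb)^2" "0 \<le> (xa + yb)^2 + (ya - xb)^2" by auto
  ultimately show J: "2 * \<bar>J\<bar> \<le> E" by linarith
  have "\<bar>2 * q * J / r\<bar> = \<bar>q\<bar> * (2 * \<bar>J\<bar>) / r" using r by (simp add: abs_mult)
  also have "\<dots> \<le> (r/4) * E / r"
    by (intro divide_right_mono mult_mono q J) (use r in auto)
  also have "\<dots> = E / 4" using r by simp
  finally have qJ: "\<bar>2 * q * J / r\<bar> \<le> E / 4" .
  show "3/4 * E \<le> E + 2 * q * J / r" "E + 2 * q * J / r \<le> 5/4 * E"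
    using abs_le_D1[OF qJ] abs_le_D2[OF qJ] by linarith+
qed

text \<open>The derivative of \<open>F = E + 2 q J / r\<close> along the system, where \<open>m = q'\<close>: the correction
  term cancels the part \<open>-4 q |w\<^sub>1|\<^sup>2\<close> of \<open>E' = -4 c |w\<^sub>1|\<^sup>2\<close>, leaving \<open>F' + 2 q F\<close> controlled by
  \<open>c - q\<close> and \<open>m / r\<close> alone.\<close>
lemma corrected_energy_derivative_bound_components:
  fixes xa ya xb yb c q m r :: real
  assumes r: "r > 0" and q: "\<bar>q\<bar> \<le> r/4"
  defines "E \<equiv> xa^2 + ya^2 + xb^2 + yb^2" and "J \<equiv> xa * yb - ya * xb"
    and "E' \<equiv> 2 * (xa * (-2*c*xa - r*yb) + ya * (-2*c*ya + r*xb) + xb * (- r * ya) + yb * (r * xa))"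
    and "J' \<equiv> (-2*c*xa - r*yb) * yb + xa * (r * xa) - (-2*c*ya + r*xb) * xb - ya * (- r * ya)"
  shows "\<bar>E' + 2 * (m * J + q * J') / r + 2 * q * (E + 2 * q * J / r)\<bar>
           \<le> 4/3 * (5 * \<bar>c - q\<bar> + \<bar>m\<bar> / r) * (E + 2 * q * J / r)"
proof -
  define R where "R = c - q"
  define P where "P = xa^2 + ya^2"
  note comparable = corrected_energy_comparable_components[OF r q, where xa = xa and ya = ya and xb = xb and yb = yb,
    folded E_def J_def]
  have P: "0 \<le> P" "P \<le> E" unfolding P_def E_def by auto
  have "E' + 2 * (m * J + q * J') / r + 2 * q * (E + 2 * q * J / r)
      = -4 * R * P + 2 * m * J / r - 4 * q * R * J / r"
    unfolding R_def P_def E_def J_def E'_def J'_def using r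
    by (simp add: field_simps power2_eq_square)
  also have "\<bar>\<dots>\<bar> \<le> \<bar>-4 * R * P\<bar> + \<bar>2 * m * J / r\<bar> + \<bar>4 * q * R * J / r\<bar>"
    by (rule order_trans[OF abs_triangle_ineq4 add_right_mono[OF abs_triangle_ineq]])
  also have "\<dots> = 4 * \<bar>R\<bar> * P + \<bar>m\<bar> * (2 * \<bar>J\<bar>) / r + 2 * \<bar>R\<bar> * (\<bar>q\<bar> * (2 * \<bar>J\<bar>) / r)"
    using P r by (simp add: abs_mult algebra_simps)
  also have "\<dots> \<le> 4 * \<bar>R\<bar> * E + \<bar>m\<bar> * E / r + 2 * \<bar>R\<bar> * ((r/4) * E / r)"
  proof -
    have "\<bar>m\<bar> * (2 * \<bar>J\<bar>) / r \<le> \<bar>m\<bar> * E / r"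
      using comparable(1) r by (simp add: divide_right_mono mult_left_mono)
    moreover have "\<bar>q\<bar> * (2 * \<bar>J\<bar>) / r \<le> (r/4) * E / r"
      by (intro divide_right_mono mult_mono q comparable(1)) (use r in auto)
    ultimately show ?thesis
      using P by (intro add_mono mult_left_mono) auto
  qed
  also have "\<dots> \<le> (5 * \<bar>R\<bar> + \<bar>m\<bar> / r) * E"
    using r P by (simp add: field_simps)
  also have "\<dots> \<le> (5 * \<bar>R\<bar> + \<bar>m\<bar> / r) * (4/3 * (E + 2 * q * J / r))"
    using comparable(2) r by (intro mult_left_mono) auto
  also have "\<dots> = 4/3 * (5 * \<bar>R\<bar> + \<bar>m\<bar> / r) * (E + 2 * q * J / r)"
    by (metis mult.assoc mult.left_commute)
  finally show ?thesis unfolding R_def .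
qed

definition corrected_energy ::
    "(real \<Rightarrow> real) \<Rightarrow> real \<Rightarrow> (real \<Rightarrow> complex^2) \<Rightarrow> real \<Rightarrow> real" where
  "corrected_energy q r W s = (norm (W s))^2 + 2 * q s * Im (cnj (W s $ 1) * W s $ 2) / r"

lemma corrected_energy_eq:
  "corrected_energy q r W s =
    (Re (W s $ 1))^2 + (Im (W s $ 1))^2 + (Re (W s $ 2))^2 + (Im (W s $ 2))^2
    + 2 * q s * (Re (W s $ 1) * Im (W s $ 2) - Im (W s $ 1) * Re (W s $ 2)) / r"
  by (simp add: corrected_energy_def norm_vec_def L2_set_def sum_2 cmod_power2)

lemma corrected_energy_bounds:
  assumes "r > 0" and "\<bar>q s\<bar> \<le> r / 4"
  shows "3/4 * (norm (W s))^2 \<le> corrected_energy q r W s"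
    "corrected_energy q r W s \<le> 5/4 * (norm (W s))^2"
  using corrected_energy_comparable_components(2,3)[OF assms, where xa = "Re (W s $ 1)" and ya = "Im (W s $ 1)"
      and xb = "Re (W s $ 2)" and yb = "Im (W s $ 2)"]
  by (simp_all add: corrected_energy_eq norm_vec_def L2_set_def sum_2 cmod_power2)

lemma has_real_derivative_corrected_energy:
  fixes W :: "real \<Rightarrow> complex^2" and c q m :: "real \<Rightarrow> real"
  assumes r: "r > 0" and q_le: "\<bar>q x\<bar> \<le> r / 4"
    and W: "(W has_vector_derivative (Amat (c x) r *v W x)) (at x)"
    and q: "(q has_real_derivative m x) (at x)"
  defines "F \<equiv> corrected_energy q r W"
  shows "\<exists>D. (F has_real_derivative D) (at x) \<and>
    \<bar>D + 2 * q x * F x\<bar> \<le> 4/3 * (5 * \<bar>c x - q x\<bar> + \<bar>m x\<bar> / r) * F x"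
proof -
  define xa ya xb yb where "xa s = Re (W s $ 1)" and "ya s = Im (W s $ 1)"
    and "xb s = Re (W s $ 2)" and "yb s = Im (W s $ 2)" for s
  define E where "E s = xa s^2 + ya s^2 + xb s^2 + yb s^2" for s
  define J where "J s = xa s * yb s - ya s * xb s" for s
  have F_eq: "F s = E s + 2 * q s * J s / r" for s
    unfolding F_def E_def J_def xa_def ya_def xb_def yb_def by (rule corrected_energy_eq)
  note Re_Im = has_real_derivative_Re_Im_vec_nth[OF W]
  have components: "(xa has_real_derivative (-2 * c x * xa x - r * yb x)) (at x)"
    "(ya has_real_derivative (-2 * c x * ya x + r * xb x)) (at x)"
    "(xb has_real_derivative (- r * ya x)) (at x)"
    "(yb has_real_derivative (r * xa x)) (at x)"
  proof -
    show "(xa has_real_derivative (-2 * c x * xa x - r * yb x)) (at x)"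
      unfolding xa_def yb_def
      by (rule DERIV_cong[OF Re_Im(1)[of 1]]) (simp add: Amat_mult_vec_nth algebra_simps)
    show "(ya has_real_derivative (-2 * c x * ya x + r * xb x)) (at x)"
      "(xb has_real_derivative (- r * ya x)) (at x)" "(yb has_real_derivative (r * xa x)) (at x)"
      unfolding xa_def ya_def xb_def yb_def using Re_Im(2)[of 1] Re_Im[of 2]
      by (simp_all add: Amat_mult_vec_nth)
  qed
  define E' where "E' = 2 * (xa x * (-2 * c x * xa x - r * yb x) + ya x * (-2 * c x * ya x + r * xb x)
      + xb x * (- r * ya x) + yb x * (r * xa x))"
  define J' where "J' = (-2 * c x * xa x - r * yb x) * yb x + xa x * (r * xa x)
      - (-2 * c x * ya x + r * xb x) * xb x - ya x * (- r * ya x)"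
  have "(E has_real_derivative E') (at x)" "(J has_real_derivative J') (at x)"
    unfolding E_def E'_def J_def J'_def
    by (auto intro!: derivative_eq_intros components simp: algebra_simps)
  then have "(F has_real_derivative E' + 2 * (m x * J x + q x * J') / r) (at x)"
    unfolding F_eq[abs_def] using r
    by (auto intro!: derivative_eq_intros q simp: algebra_simps add_divide_distrib)
  moreover have "\<bar>E' + 2 * (m x * J x + q x * J') / r + 2 * q x * F x\<bar>
      \<le> 4/3 * (5 * \<bar>c x - q x\<bar> + \<bar>m x\<bar> / r) * F x"
    using corrected_energy_derivative_bound_components[OF r q_le,
        where xa = "xa x" and ya = "ya x" and xb = "xb x" and yb = "yb x" and c = "c x" and m = "m x"]
    unfolding F_eq E_def J_def E'_def J'_def by simp
  ultimately show ?thesis by blast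
qed

lemma le_of_exp_weighted_le:
  fixes E E' F F' S S' K :: real
  assumes "3/4 * E \<le> F" "F' \<le> 5/4 * E'" "0 \<le> F" "0 \<le> F'" "\<bar>S\<bar> \<le> 1" "\<bar>S'\<bar> \<le> 1"
    and "F * exp (- 2 * S) \<le> exp K * (F' * exp (- 2 * S'))"
  shows "E \<le> 5/3 * exp (4 + K) * E'"
proof -
  have exp_S: "exp (2 * S) \<le> exp 2" "exp (- 2 * S') \<le> exp 2"
    using assms(5,6) by (auto simp: abs_le_iff)
  have "F' * exp (- 2 * S') \<le> 5/4 * E' * exp 2"
    using assms(2,4) exp_S(2) by (intro mult_mono) auto
  have "E \<le> 4/3 * exp (2 * S) * (F * exp (- 2 * S))"
    using assms(1) by (simp add: exp_minus field_simps)
  also have "\<dots> \<le> 4/3 * exp 2 * (exp K * (F' * exp (- 2 * S')))"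
    by (rule mult_mono) (use exp_S(1) assms(3,7) in auto)
  also have "\<dots> \<le> 4/3 * exp 2 * (exp K * (5/4 * E' * exp 2))"
    using \<open>F' * exp (- 2 * S') \<le> 5/4 * E' * exp 2\<close> by (intro mult_left_mono) auto
  also have "\<dots> = 5/3 * exp (4 + K) * E'"
    by (simp add: exp_add[symmetric] field_simps)
  finally show ?thesis .
qed

lemma energy_comparable:
  fixes W :: "real \<Rightarrow> complex^2" and c q m S H h :: "real \<Rightarrow> real"
  assumes "a \<le> b" and r: "r > 0"
    and cont: "continuous_on {a..b} W" "continuous_on {a..b} q" "continuous_on {a..b} S"
      "continuous_on {a..b} H"
    and W: "\<And>x. a < x \<Longrightarrow> x < b \<Longrightarrow> (W has_vector_derivative (Amat (c x) r *v W x)) (at x)"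
    and q: "\<And>x. a < x \<Longrightarrow> x < b \<Longrightarrow> (q has_real_derivative m x) (at x)"
    and S: "\<And>x. a < x \<Longrightarrow> x < b \<Longrightarrow> (S has_real_derivative - q x) (at x)"
    and H: "\<And>x. a < x \<Longrightarrow> x < b \<Longrightarrow> (H has_real_derivative h x) (at x)"
    and q_le: "\<And>x. a \<le> x \<Longrightarrow> x \<le> b \<Longrightarrow> \<bar>q x\<bar> \<le> r / 4"
    and S_le: "\<And>x. a \<le> x \<Longrightarrow> x \<le> b \<Longrightarrow> \<bar>S x\<bar> \<le> 1"
    and h: "\<And>x. a < x \<Longrightarrow> x < b \<Longrightarrow> 4/3 * (5 * \<bar>c x - q x\<bar> + \<bar>m x\<bar> / r) \<le> h x"
  shows "(norm (W b))^2 \<le> 5/3 * exp (4 + (H b - H a)) * (norm (W a))^2"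
    "(norm (W a))^2 \<le> 5/3 * exp (4 + (H b - H a)) * (norm (W b))^2"
proof -
  define F where "F = corrected_energy q r W"
  define G where "G s = F s * exp (- 2 * S s)" for s
  have F_bounds: "3/4 * (norm (W s))^2 \<le> F s" "F s \<le> 5/4 * (norm (W s))^2"
    if "a \<le> s" "s \<le> b" for s
    unfolding F_def using corrected_energy_bounds[where q = q and s = s, OF r q_le[OF that]] by auto
  have F_nonneg: "0 \<le> F s" if "a \<le> s" "s \<le> b" for s
    using F_bounds(1)[OF that] zero_le_power2[of "norm (W s)"] by linarith
  have "continuous_on {a..b} F"
    unfolding F_def corrected_energy_def using r by (intro continuous_intros cont) auto
  then have "continuous_on {a..b} G"
    unfolding G_def by (intro continuous_intros cont)
  moreover have "\<exists>D. (G has_real_derivative D) (at x) \<and> \<bar>D\<bar> \<le> h x * G x" if x: "a < x" "x < b" for x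
  proof -
    have "\<bar>q x\<bar> \<le> r / 4" using q_le x by simp
    from has_real_derivative_corrected_energy[where q = q and c = c and m = m and x = x,
        OF r this W[OF x] q[OF x], folded F_def]
    obtain D where D: "(F has_real_derivative D) (at x)"
      "\<bar>D + 2 * q x * F x\<bar> \<le> 4/3 * (5 * \<bar>c x - q x\<bar> + \<bar>m x\<bar> / r) * F x"
      by blast
    have "(G has_real_derivative exp (- 2 * S x) * (D + 2 * q x * F x)) (at x)"
      unfolding G_def by (auto intro!: derivative_eq_intros D(1) S[OF x] simp: algebra_simps)
    moreover have "\<bar>D + 2 * q x * F x\<bar> \<le> h x * F x"
      using D(2) mult_right_mono[OF h[OF x] F_nonneg, of x] x by simp
    ultimately show ?thesis
      unfolding G_def by (intro exI[of _ "exp (- 2 * S x) * _"]) (auto simp: abs_mult)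
  qed
  ultimately have G_le: "G b \<le> exp (H b - H a) * G a" "G a \<le> exp (H b - H a) * G b"
    using two_sided_gronwall[OF \<open>a \<le> b\<close> _ cont(4) H] by blast+
  have "(norm (W s))^2 \<le> 5/3 * exp (4 + K) * (norm (W s'))^2"
    if "G s \<le> exp K * G s'" "s \<in> {a..b}" "s' \<in> {a..b}" for s s' K
    using le_of_exp_weighted_le[OF F_bounds(1)[of s] F_bounds(2)[of s'] F_nonneg[of s] F_nonneg[of s']
        S_le[of s] S_le[of s']] that unfolding G_def by auto
  from this[OF G_le(1)] this[OF G_le(2)] \<open>a \<le> b\<close>
  show "(norm (W b))^2 \<le> 5/3 * exp (4 + (H b - H a)) * (norm (W a))^2"
    "(norm (W a))^2 \<le> 5/3 * exp (4 + (H b - H a)) * (norm (W b))^2"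
    by auto
qed

context riccati_setting
begin

lemma energy_rate_le:
  assumes "x \<ge> T" and "r > 0" and "\<bar>M x\<bar> \<le> C * w" and "C \<ge> 0"
  shows "4/3 * (5 * \<bar>bfun M x - QQ M 1 x\<bar> + \<bar>M x\<bar> / r) \<le> 14 * u x + 2 * (C * w / r)"
proof -
  have "\<bar>bfun M x - QQ M 1 x\<bar> \<le> 2 * u x" "0 \<le> u x"
    using abs_bfun_minus_QQ_1_le u_nonneg assms(1) T_pos by auto
  moreover have "\<bar>M x\<bar> / r \<le> C * w / r" "0 \<le> C * w / r"
    using assms(2-4) by (auto simp: divide_right_mono)
  moreover have "4/3 * (5 * X + A) \<le> 14 * U + 2 * Y"
    if "X \<le> 2 * U" "0 \<le> U" "A \<le> Y" "0 \<le> Y" for X A U Y :: real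
  proof -
    have "4/3 * (5 * X + A) = 20/3 * X + 4/3 * A" by (simp add: algebra_simps)
    with that show ?thesis by linarith
  qed
  ultimately show ?thesis by blast
qed

lemma norm_sq_comparable:
  fixes W :: "real \<Rightarrow> complex^2" and P w :: "real \<Rightarrow> real"
  assumes W: "\<And>s. s \<ge> T \<Longrightarrow>
      (W has_vector_derivative (Amat (bfun M s) r *v W s)) (at s within {T..})"
    and r: "r > 0" and t0: "T \<le> t0" "t0 \<le> t"
    and QQ_1_le: "\<And>s. t0 \<le> s \<Longrightarrow> s \<le> t \<Longrightarrow> \<bar>QQ M 1 s\<bar> \<le> r / 4"
    and P: "\<And>x. x > 0 \<Longrightarrow> (P has_real_derivative w x) (at x)"
    and M_le: "\<And>x. x > 0 \<Longrightarrow> \<bar>M x\<bar> \<le> C * w x" and "C \<ge> 0"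
  defines "L \<equiv> 5/3 * exp (4 + (14 * (phi M t0 - phi M t) + 2 * C * ((P t - P t0) / r)))"
  shows "(norm (W t))^2 \<le> L * (norm (W t0))^2" "(norm (W t0))^2 \<le> L * (norm (W t))^2"
proof -
  define H where "H s = -14 * phi M s + 2 * (C * P s / r)" for s
  have pos: "s > 0" "s > T" if "t0 < s" for s
    using that t0 T_pos by auto
  have H_deriv: "(H has_real_derivative 14 * u x + 2 * (C * w x / r)) (at x)" if "x > 0" for x
    unfolding H_def using r by (auto intro!: derivative_eq_intros has_real_derivative_phi P that)
  have "continuous_on {T..} W"
    unfolding continuous_on_eq_continuous_within
    using W by (auto intro: has_vector_derivative_continuous)
  then have W_cont: "continuous_on {t0..t} W"
    by (rule continuous_on_subset) (use t0 in auto)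
  have "{t0..t} \<subseteq> {0..}"
    using t0 T_pos by auto
  note continuous_QQ_1 = continuous_on_subset[OF continuous_on_QQ_1 this]
    and continuous_S = continuous_on_subset[OF continuous_on_tail_int[OF continuous_on_QQ_1 tail_conv_QQ_1] this]
  have H_cont: "continuous_on {t0..t} H"
    by (intro continuous_at_imp_continuous_on ballI DERIV_isCont[OF H_deriv]) (use t0 T_pos in auto)
  have derivatives: "(W has_vector_derivative (Amat (bfun M x) r *v W x)) (at x)"
    "(QQ M 1 has_real_derivative M x) (at x)"
    "(tail_int (QQ M 1) has_real_derivative - QQ M 1 x) (at x)"
    "(H has_real_derivative 14 * u x + 2 * (C * w x / r)) (at x)"
    if "t0 < x" "x < t" for x
  proof -
    have "at x within {T..} = at x"
      by (rule at_within_interior) (use pos[OF that(1)] in auto)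
    then show "(W has_vector_derivative (Amat (bfun M x) r *v W x)) (at x)"
      using W[of x] pos[OF that(1)] by simp
    show "(QQ M 1 has_real_derivative M x) (at x)"
      "(H has_real_derivative 14 * u x + 2 * (C * w x / r)) (at x)"
      using has_real_derivative_QQ_1 H_deriv pos[OF that(1)] by auto
    show "(tail_int (QQ M 1) has_real_derivative - QQ M 1 x) (at x)"
      using has_real_derivative_tail_int[OF continuous_on_QQ_1 tail_conv_QQ_1] pos[OF that(1)] by simp
  qed
  have bounds: "\<bar>QQ M 1 x\<bar> \<le> r / 4" "\<bar>tail_int (QQ M 1) x\<bar> \<le> 1" if "t0 \<le> x" "x \<le> t" for x
    using QQ_1_le tail_QQ_1_le that t0 by auto
  have rate: "4/3 * (5 * \<bar>bfun M x - QQ M 1 x\<bar> + \<bar>M x\<bar> / r) \<le> 14 * u x + 2 * (C * w x / r)"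
    if "t0 < x" "x < t" for x
    using energy_rate_le[OF _ r M_le \<open>C \<ge> 0\<close>] pos[OF that(1)] by simp
  have "H t - H t0 = 14 * (phi M t0 - phi M t) + 2 * C * ((P t - P t0) / r)"
    unfolding H_def by (simp add: algebra_simps diff_divide_distrib)
  with energy_comparable[OF \<open>t0 \<le> t\<close> r W_cont continuous_QQ_1 continuous_S H_cont
      derivatives bounds rate]
  show "(norm (W t))^2 \<le> L * (norm (W t0))^2" "(norm (W t0))^2 \<le> L * (norm (W t))^2"
    unfolding L_def by simp_all
qed

lemma norm_comparable:
  fixes W :: "real \<Rightarrow> complex^2" and P w :: "real \<Rightarrow> real"
  assumes W: "\<And>s. s \<ge> T \<Longrightarrow>
      (W has_vector_derivative (Amat (bfun M s) r *v W s)) (at s within {T..})"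
    and r: "r > 0" and t0: "T \<le> t0" "t0 \<le> t"
    and QQ_1_le: "\<And>s. t0 \<le> s \<Longrightarrow> s \<le> t \<Longrightarrow> \<bar>QQ M 1 s\<bar> \<le> r / 4"
    and P: "\<And>x. x > 0 \<Longrightarrow> (P has_real_derivative w x) (at x)"
    and M_le: "\<And>x. x > 0 \<Longrightarrow> \<bar>M x\<bar> \<le> C * w x" and "C \<ge> 0"
    and P_le: "(P t - P t0) / r \<le> B"
  defines "K \<equiv> sqrt (5/3 * exp (4 + 14/1296 + 2 * C * B))"
  shows "norm (W t) \<le> K * norm (W t0)" "norm (W t0) \<le> K * norm (W t)"
proof -
  have "14 * (phi M t0 - phi M t) + 2 * C * ((P t - P t0) / r) \<le> 14/1296 + 2 * C * B"
    using phi_le_1296[OF t0(1)] phi_nonneg[of t] t0 T_pos mult_left_mono[OF P_le, of "2 * C"]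
      \<open>C \<ge> 0\<close> by auto
  moreover have K: "K \<ge> 0" "K^2 = 5/3 * exp (4 + 14/1296 + 2 * C * B)"
    unfolding K_def by simp_all
  ultimately have factor:
    "5/3 * exp (4 + (14 * (phi M t0 - phi M t) + 2 * C * ((P t - P t0) / r))) \<le> K^2"
    by simp
  note energy = norm_sq_comparable[OF W r t0 QQ_1_le P M_le \<open>C \<ge> 0\<close>]
  have "(norm (W t))^2 \<le> (K * norm (W t0))^2" "(norm (W t0))^2 \<le> (K * norm (W t))^2"
    using order_trans[OF energy(1) mult_right_mono[OF factor]]
      order_trans[OF energy(2) mult_right_mono[OF factor]]
    by (simp_all add: power_mult_distrib)
  then show "norm (W t) \<le> K * norm (W t0)" "norm (W t0) \<le> K * norm (W t)"
    using K(1) by (auto intro: power2_le_imp_le)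
qed

end

section \<open>The hyperbolic zone\<close>

lemma parameter_consequences:
  fixes \<alpha> \<beta> \<gamma> :: real
  assumes "\<alpha> \<noteq> 0 \<Longrightarrow> \<gamma> \<ge> \<beta> \<and> \<beta> \<ge> (\<alpha> + 1) / 2" and "\<alpha> = 0 \<Longrightarrow> \<gamma> \<ge> \<beta> \<and> \<beta> > 1 / 2"
    and "\<alpha> \<le> 1"
  shows "\<alpha> \<le> \<gamma>" "\<alpha> + 1 \<le> 2 * \<beta>" "\<alpha> \<ge> 0 \<Longrightarrow> 2 * \<beta> > 1"
proof -
  have "\<beta> \<le> \<gamma>" "\<alpha> + 1 \<le> 2 * \<beta>"
    using assms(1,2) by (cases "\<alpha> = 0"; force)+
  then show "\<alpha> \<le> \<gamma>" "\<alpha> + 1 \<le> 2 * \<beta>"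
    using assms(3) by linarith+
  show "\<alpha> \<ge> 0 \<Longrightarrow> 2 * \<beta> > 1"
    using assms(1,2) by (cases "\<alpha> = 0") auto
qed

definition weight :: "real \<Rightarrow> real \<Rightarrow> real \<Rightarrow> real" where
  "weight \<alpha> \<beta> s = (if \<alpha> \<ge> 0 then (1 + s) powr (- 2 * \<beta>) else (1 + s) powr (- \<alpha> - 1))"

definition weight_antideriv :: "real \<Rightarrow> real \<Rightarrow> real \<Rightarrow> real" where
  "weight_antideriv \<alpha> \<beta> s =
    (if \<alpha> \<ge> 0 then - ((1 + s) powr (1 - 2 * \<beta>)) / (2 * \<beta> - 1) else (1 + s) powr (- \<alpha>) / (- \<alpha>))"

lemma has_real_derivative_weight_antideriv:
  assumes "\<alpha> \<ge> 0 \<Longrightarrow> 2 * \<beta> > 1" and "x > -1"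
  shows "(weight_antideriv \<alpha> \<beta> has_real_derivative weight \<alpha> \<beta> x) (at x)"
proof -
  have powr: "((\<lambda>s. (1 + s) powr e) has_real_derivative e * (1 + x) powr (e - 1)) (at x)" for e
    using DERIV_fun_powr[of "\<lambda>s. 1 + s" 1 x e] assms(2) by (auto intro!: derivative_eq_intros)
  show ?thesis
  proof (cases "\<alpha> \<ge> 0")
    case True
    have "((\<lambda>s. - ((1 + s) powr (1 - 2 * \<beta>)) / (2 * \<beta> - 1)) has_real_derivative
        - ((1 - 2 * \<beta>) * (1 + x) powr (1 - 2 * \<beta> - 1)) / (2 * \<beta> - 1)) (at x)"
      by (rule DERIV_cdivide[OF DERIV_minus[OF powr]])
    moreover have "- ((1 - 2 * \<beta>) * (1 + x) powr (1 - 2 * \<beta> - 1)) / (2 * \<beta> - 1)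
        = (1 + x) powr (- 2 * \<beta>)"
      using assms(1)[OF True] by (simp add: field_simps)
    ultimately show ?thesis
      unfolding weight_antideriv_def weight_def using True by simp
  next
    case False
    from DERIV_cdivide[OF powr[of "- \<alpha>"], of "- \<alpha>"] show ?thesis
      unfolding weight_antideriv_def weight_def using False by simp
  qed
qed

lemma powr_le_weight:
  assumes "\<alpha> + 1 \<le> 2 * \<beta>" and "x \<ge> 0"
  shows "(1 + x) powr (- 2 * \<beta>) \<le> weight \<alpha> \<beta> x"
  unfolding weight_def using assms by (auto intro: powr_mono)

text \<open>The zone condition is used at the endpoint where \<open>(1 + s)\<^sup>\<alpha>\<close> is smallest: \<open>t\<^sub>0\<close> if
  \<open>\<alpha> \<ge> 0\<close>, \<open>t\<close> if \<open>\<alpha> < 0\<close>. A pointwise bound would lose a logarithm when \<open>2\<beta> = \<alpha> + 1\<close>.\<close>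
lemma weight_antideriv_diff_le:
  assumes "\<alpha> + 1 \<le> 2 * \<beta>" and "\<alpha> \<ge> 0 \<Longrightarrow> 2 * \<beta> > 1"
    and t: "0 \<le> t0" "t0 \<le> t" and r: "r > 0" and N: "N > 0"
    and zone: "N \<le> (1 + t0) powr \<alpha> * r" "N \<le> (1 + t) powr \<alpha> * r"
  defines "\<delta> \<equiv> if \<alpha> \<ge> 0 then 2 * \<beta> - 1 else - \<alpha>"
  shows "(weight_antideriv \<alpha> \<beta> t - weight_antideriv \<alpha> \<beta> t0) / r \<le> 1 / (N * \<delta>)"
proof -
  define s where "s = (if \<alpha> \<ge> 0 then t0 else t)"
  define Y where "Y = (if \<alpha> \<ge> 0 then (1 + t0) powr (1 - 2 * \<beta>) else (1 + t) powr (- \<alpha>))"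
  have \<delta>: "\<delta> > 0" unfolding \<delta>_def using assms(2) by auto
  have "weight_antideriv \<alpha> \<beta> t - weight_antideriv \<alpha> \<beta> t0 \<le> Y / \<delta>"
  proof (cases "\<alpha> \<ge> 0")
    case True
    have "weight_antideriv \<alpha> \<beta> t - weight_antideriv \<alpha> \<beta> t0 = (Y - (1 + t) powr (1 - 2 * \<beta>)) / \<delta>"
      unfolding weight_antideriv_def Y_def \<delta>_def using True by (simp add: diff_divide_distrib)
    also have "\<dots> \<le> Y / \<delta>" using \<delta> by (intro divide_right_mono) auto
    finally show ?thesis .
  next
    case False
    have "weight_antideriv \<alpha> \<beta> t - weight_antideriv \<alpha> \<beta> t0 = (Y - (1 + t0) powr (- \<alpha>)) / \<delta>"
      unfolding weight_antideriv_def Y_def \<delta>_def using False by (simp add: diff_divide_distrib)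
    also have "\<dots> \<le> Y / \<delta>" using \<delta> by (intro divide_right_mono) auto
    finally show ?thesis .
  qed
  moreover have "1 / r \<le> (1 + s) powr \<alpha> / N"
    using zone r N unfolding s_def by (auto simp: field_simps)
  moreover have "Y * (1 + s) powr \<alpha> \<le> 1"
  proof (cases "\<alpha> \<ge> 0")
    case True
    have "Y * (1 + s) powr \<alpha> = (1 + t0) powr (1 - 2 * \<beta> + \<alpha>)"
      unfolding Y_def s_def using True by (simp add: powr_add)
    also have "\<dots> \<le> (1 + t0) powr 0"
      by (rule powr_mono) (use assms(1) t in auto)
    finally show ?thesis using t by simp
  next
    case False
    then show ?thesis
      unfolding Y_def s_def using t by (simp add: powr_add[symmetric])
  qed
  moreover have "Y \<ge> 0" unfolding Y_def by simp
  ultimately have "(weight_antideriv \<alpha> \<beta> t - weight_antideriv \<alpha> \<beta> t0) * (1 / r)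
      \<le> Y / \<delta> * ((1 + s) powr \<alpha> / N)"
    by (intro mult_mono) (use r \<delta> in auto)
  also have "\<dots> = (Y * (1 + s) powr \<alpha>) / (N * \<delta>)" by simp
  also have "\<dots> \<le> 1 / (N * \<delta>)"
    using \<open>Y * (1 + s) powr \<alpha> \<le> 1\<close> N \<delta> by (intro divide_right_mono) auto
  finally show ?thesis by simp
qed

lemma zone_interval:
  fixes \<xi> :: "real^'n"
  assumes "(t, \<xi>) \<in> ZH T \<alpha> N" and "\<xi> \<noteq> 0" and T: "T > 0" and N: "N > 0"
  defines "t0 \<equiv> if \<alpha> > 0 then t_xi T \<alpha> N \<xi> else T"
  shows "T \<le> t0" "t0 \<le> t" "\<And>s. t0 \<le> s \<Longrightarrow> s \<le> t \<Longrightarrow> N \<le> (1 + s) powr \<alpha> * norm \<xi>"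
proof -
  define r where "r = norm \<xi>"
  have r: "r > 0" and t: "T \<le> t" "N / r \<le> (1 + t) powr \<alpha>"
    using assms(1,2) unfolding ZH_def r_def by (auto simp: field_simps)
  show "T \<le> t0" unfolding t0_def t_xi_def by auto
  show "t0 \<le> t"
  proof (cases "\<alpha> > 0")
    case True
    have "(N / r) powr (1 / \<alpha>) \<le> ((1 + t) powr \<alpha>) powr (1 / \<alpha>)"
      by (intro powr_mono2) (use True N r t in auto)
    also have "\<dots> = 1 + t" using True t T by (simp add: powr_powr)
    finally show ?thesis unfolding t0_def t_xi_def r_def using True t by simp
  qed (use t t0_def in simp)
  fix s assume s: "t0 \<le> s" "s \<le> t"
  with \<open>T \<le> t0\<close> T have "s > 0" by simp
  have "N / r \<le> (1 + s) powr \<alpha>"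
  proof (cases \<alpha> "0 :: real" rule: linorder_cases)
    case greater
    have "(N / r) powr (1 / \<alpha>) \<le> 1 + s"
      using s greater unfolding t0_def t_xi_def r_def by simp
    then have "((N / r) powr (1 / \<alpha>)) powr \<alpha> \<le> (1 + s) powr \<alpha>"
      by (intro powr_mono2) (use greater in auto)
    then show ?thesis using greater N r by (simp add: powr_powr)
  next
    case equal
    then show ?thesis using t \<open>s > 0\<close> T by simp
  next
    case less
    have "(1 + t) powr \<alpha> \<le> (1 + s) powr \<alpha>"
      by (rule powr_mono2') (use less s \<open>s > 0\<close> in auto)
    then show ?thesis using t by linarith
  qed
  then show "N \<le> (1 + s) powr \<alpha> * norm \<xi>"
    using r unfolding r_def by (simp add: field_simps)
qed

lemma abs_le_quarter_in_zone:
  fixes f C \<gamma> \<alpha> N r s :: real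
  assumes "\<bar>f\<bar> \<le> C * (1 + s) powr (- \<gamma>)" and "\<alpha> \<le> \<gamma>" and "s \<ge> 0" and "C \<ge> 0"
    and "4 * C \<le> N" and "N \<le> (1 + s) powr \<alpha> * r" and "N > 0"
  shows "\<bar>f\<bar> \<le> r / 4"
proof -
  have "\<bar>f\<bar> \<le> C * (1 + s) powr (- \<alpha>)"
    using assms(1) by (rule order_trans) (use assms(2-4) in \<open>auto intro!: mult_left_mono powr_mono\<close>)
  also have "\<dots> \<le> C * (r / N)"
    using assms(3,4,6,7) by (intro mult_left_mono) (auto simp: powr_minus field_simps)
  also have "\<dots> \<le> r / 4"
  proof -
    have "0 < (1 + s) powr \<alpha> * r" using assms(6,7) by linarith
    then have "r > 0" using assms(3) by (simp add: zero_less_mult_iff)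
    then have "4 * C * (r / N) \<le> N * (r / N)"
      using assms(5,7) by (intro mult_right_mono) auto
    with \<open>N > 0\<close> show ?thesis by (simp add: ac_simps)
  qed
  finally show ?thesis .
qed

context riccati_setting
begin

lemma norm_comparable_in_zone:
  fixes W :: "real \<Rightarrow> complex^2" and \<xi> :: "real^'n"
  assumes exponents: "\<alpha> \<le> \<gamma>" "\<alpha> + 1 \<le> 2 * \<beta>" "\<alpha> \<ge> 0 \<Longrightarrow> 2 * \<beta> > 1"
    and M_le: "\<And>t. t \<ge> 0 \<Longrightarrow> \<bar>M t\<bar> \<le> C * (1 + t) powr (- 2 * \<beta>)" and "C \<ge> 0"
    and tail_M_le: "\<And>t. t \<ge> 0 \<Longrightarrow> \<bar>tail_int M t\<bar> \<le> C' * (1 + t) powr (- \<gamma>)" and "C' \<ge> 0"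
    and N: "4 * C' \<le> N" "N > 0"
    and W: "\<And>s. s \<ge> T \<Longrightarrow>
      (W has_vector_derivative (Amat (bfun M s) (norm \<xi>) *v W s)) (at s within {T..})"
    and zone: "(t, \<xi>) \<in> ZH T \<alpha> N" "\<xi> \<noteq> 0"
  defines "t0 \<equiv> if \<alpha> > 0 then t_xi T \<alpha> N \<xi> else T"
    and "K \<equiv> sqrt (5/3 * exp (4 + 14/1296 + 2 * C * (1 / (N * (if \<alpha> \<ge> 0 then 2 * \<beta> - 1 else - \<alpha>)))))"
  shows "norm (W t) \<le> K * norm (W t0)" "norm (W t0) \<le> K * norm (W t)"
proof -
  note interval = zone_interval[OF zone T_pos \<open>N > 0\<close>, folded t0_def]
  have "norm \<xi> > 0" using zone(2) by simp
  have QQ_1_le: "\<bar>QQ M 1 s\<bar> \<le> norm \<xi> / 4" if "t0 \<le> s" "s \<le> t" for s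
  proof -
    have "s \<ge> 0" using that interval(1) T_pos by simp
    from abs_le_quarter_in_zone[OF tail_M_le[OF this] exponents(1) this \<open>C' \<ge> 0\<close> N(1)
        interval(3)[OF that] N(2)]
    show ?thesis unfolding QQ_1 by simp
  qed
  have M_le_weight: "\<bar>M x\<bar> \<le> C * weight \<alpha> \<beta> x" if "x > 0" for x
    using M_le[of x] mult_left_mono[OF powr_le_weight[OF exponents(2), of x] \<open>C \<ge> 0\<close>] that
    by simp
  have antideriv: "(weight_antideriv \<alpha> \<beta> has_real_derivative weight \<alpha> \<beta> x) (at x)" if "x > 0" for x
    using exponents(3) that by (intro has_real_derivative_weight_antideriv) auto
  have "(weight_antideriv \<alpha> \<beta> t - weight_antideriv \<alpha> \<beta> t0) / norm \<xi>
      \<le> 1 / (N * (if \<alpha> \<ge> 0 then 2 * \<beta> - 1 else - \<alpha>))"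
    using interval T_pos
    by (intro weight_antideriv_diff_le[OF exponents(2,3)] \<open>norm \<xi> > 0\<close> \<open>N > 0\<close>) auto
  from norm_comparable[OF W \<open>norm \<xi> > 0\<close> interval(1,2) QQ_1_le antideriv M_le_weight \<open>C \<ge> 0\<close> this]
  show "norm (W t) \<le> K * norm (W t0)" "norm (W t0) \<le> K * norm (W t)"
    unfolding K_def by simp_all
qed

end

theorem proposition1:
  fixes M :: "real \<Rightarrow> real" and \<alpha> \<beta> \<gamma> T :: real
    and W :: "real \<Rightarrow> real^'n \<Rightarrow> complex^2"
  assumes Mcont: "continuous_on {0..} M"
    and par: "\<alpha> \<le> 1" "\<beta> < 1" "\<gamma> > 0"
    and par_ne: "\<alpha> \<noteq> 0 \<Longrightarrow> \<gamma> \<ge> \<beta> \<and> \<beta> \<ge> (\<alpha> + 1) / 2"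
    and par_0: "\<alpha> = 0 \<Longrightarrow> \<gamma> \<ge> \<beta> \<and> \<beta> > 1 / 2"
    and conv1: "\<forall>t\<ge>0. tail_conv M t"
    and conv2: "\<forall>t\<ge>0. tail_conv (tail_int M) t"
    and conv3: "\<forall>t\<ge>0. tail_conv (\<lambda>s. (tail_int M s)\<^sup>2) t"
    and conv4: "\<forall>t\<ge>0. tail_conv (\<lambda>s. tail_int (\<lambda>\<sigma>. (tail_int M \<sigma>)\<^sup>2) s) t"
    and conv5: "\<alpha> \<le> 0 \<Longrightarrow> \<forall>t\<ge>0. tail_conv (\<lambda>s. \<bar>tail_int (tail_int M) s\<bar>) t"
    and M1a: "\<alpha> \<ge> 0 \<Longrightarrow> \<exists>C. \<forall>t\<ge>0.
               integral {0..t} (\<lambda>s. \<bar>tail_int (tail_int M) s\<bar>) \<le> C * (1 + t) powr \<alpha>"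
    and M1b: "\<alpha> \<le> 0 \<Longrightarrow> \<exists>C. \<forall>t\<ge>0.
               tail_int (\<lambda>s. \<bar>tail_int (tail_int M) s\<bar>) t \<le> C * (1 + t) powr \<alpha>"
    and M2: "\<exists>C. \<forall>t\<ge>0. \<bar>M t\<bar> \<le> C * (1 + t) powr (- 2 * \<beta>)"
    and M3a: "\<exists>C. \<forall>t\<ge>0. \<bar>tail_int M t\<bar> \<le> C * (1 + t) powr (- \<gamma>)"
    and M3b: "\<exists>C. \<forall>t\<ge>0. tail_int (\<lambda>s. (tail_int M s)\<^sup>2) t \<le> C * (1 + t) powr (- \<gamma>)"
    and M3c: "tail_conv (\<lambda>t. tail_int (\<lambda>s. (tail_int M s)\<^sup>2) t) 0"
    and extra: "\<exists>C. \<forall>t\<ge>0. (1 + t) powr \<alpha> *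
               tail_int (\<lambda>s. tail_int (\<lambda>\<sigma>. (tail_int M \<sigma>)\<^sup>2) s) t \<le> C"
    and T: "T > 0" "\<forall>t\<ge>T. \<bar>tail_int (QQ M 1) t\<bar> \<le> 1 \<and> phi M t \<le> 6 powr (-4)"
    and W: "\<forall>\<xi>. \<forall>t\<ge>T. ((\<lambda>s. W s \<xi>) has_vector_derivative
                 (Amat (bfun M t) (norm \<xi>) *v W t \<xi>)) (at t within {T..})"
  shows "\<exists>N>0. \<exists>K\<^sub>1>0. \<forall>t \<xi>. (t, \<xi>) \<in> ZH T \<alpha> N \<and> \<xi> \<noteq> 0 \<longrightarrow>
           (\<alpha> > 0 \<longrightarrow> inverse K\<^sub>1 * norm (W (t_xi T \<alpha> N \<xi>) \<xi>) \<le> norm (W t \<xi>)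
                      \<and> norm (W t \<xi>) \<le> K\<^sub>1 * norm (W (t_xi T \<alpha> N \<xi>) \<xi>)) \<and>
           (\<alpha> \<le> 0 \<longrightarrow> inverse K\<^sub>1 * norm (W T \<xi>) \<le> norm (W t \<xi>)
                      \<and> norm (W t \<xi>) \<le> K\<^sub>1 * norm (W T \<xi>))"
proof -
  interpret riccati_setting M T
    by unfold_locales (use Mcont conv1 conv2 conv3 conv4 T in auto)
  have exponents: "\<alpha> \<le> \<gamma>" "\<alpha> + 1 \<le> 2 * \<beta>" "\<alpha> \<ge> 0 \<Longrightarrow> 2 * \<beta> > 1"
    using parameter_consequences[of \<alpha> \<beta> \<gamma>] par_ne par_0 par(1) by auto
  obtain C where C: "\<forall>t\<ge>0. \<bar>M t\<bar> \<le> C * (1 + t) powr (- 2 * \<beta>)" using M2 by blast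
  obtain C' where C': "\<forall>t\<ge>0. \<bar>tail_int M t\<bar> \<le> C' * (1 + t) powr (- \<gamma>)" using M3a by blast
  have "C \<ge> 0" "C' \<ge> 0"
    using C[rule_format, of 0] C'[rule_format, of 0] by auto
  define N where "N = 4 * C' + 1"
  define K where "K = sqrt (5/3 * exp (4 + 14/1296 +
    2 * C * (1 / (N * (if \<alpha> \<ge> 0 then 2 * \<beta> - 1 else - \<alpha>)))))"
  have N: "4 * C' \<le> N" "N > 0" using \<open>C' \<ge> 0\<close> by (simp_all add: N_def)
  have "K > 0" by (simp add: K_def)
  have "norm (W t \<xi>) \<le> K * norm (W (if \<alpha> > 0 then t_xi T \<alpha> N \<xi> else T) \<xi>) \<and>
      norm (W (if \<alpha> > 0 then t_xi T \<alpha> N \<xi> else T) \<xi>) \<le> K * norm (W t \<xi>)"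
    if "(t, \<xi>) \<in> ZH T \<alpha> N" "\<xi> \<noteq> 0" for t \<xi>
    using norm_comparable_in_zone[where W = "\<lambda>s. W s \<xi>", OF exponents _ \<open>C \<ge> 0\<close> _ \<open>C' \<ge> 0\<close> N _ that]
      C C' W unfolding K_def by auto
  moreover have "inverse K * a \<le> b" if "a \<le> K * b" for a b
    using that \<open>K > 0\<close> by (simp add: field_simps)
  ultimately show ?thesis
    using N(2) \<open>K > 0\<close> by (intro exI[of _ N] exI[of _ K]) auto
qed

end
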